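(* Let $\mathbb F_q$ be any finite field. Then $R_q(2,t) \leq m_q(t)$ for all integers $t \geq 2$.
   Context: For $A \subseteq \mathbb F_q^n$, the direction set is $A^\to := \{d \in \mathbb F_q^n : \exists x \in \mathbb F_q^n \text{ with } x + \lambda d \in A \text{ for all } \lambda \in \mathbb F_q\}$, and $\omega^\to(A)$ is the largest dimension of a linear subspace of $\mathbb F_q^n$ contained in $A^\to \cup\{0\}$. $m_q(t)$ is the minimum $n$ such that every $A \subseteq \mathbb F_q^n$ with $|A| \geq q^{n-t+1}$ satisfies $\omega^\to(A) \geq t$. $R_q(s,t)$ denotes the minimum $n$ such that for every red-blue coloring of the $1$-dimensional linear subspaces of $\mathbb F_q^n$, there is either a linear subspace of dimension $s$ all of whose $1$-dimensional subspaces are red, or a linear subspace of dimension $t$ all of whose $1$-dimensional subspaces are blue. *)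

theory Defs
  imports Complex_Main "HOL-Library.Extended_Nat"
begin

text \<open>Vectors of F_q^n are represented as functions nat => 'a vanishing at indices >= n.\<close>

definition vecs :: "nat \<Rightarrow> (nat \<Rightarrow> 'a::field) set" where
  "vecs n = {v. \<forall>i\<ge>n. v i = 0}"

definition lin_comb :: "(nat \<Rightarrow> 'a::field) set \<Rightarrow> ((nat \<Rightarrow> 'a) \<Rightarrow> 'a) \<Rightarrow> (nat \<Rightarrow> 'a)" where
  "lin_comb B c = (\<lambda>i. \<Sum>b\<in>B. c b * b i)"

definition lin_span :: "(nat \<Rightarrow> 'a::field) set \<Rightarrow> (nat \<Rightarrow> 'a) set" where
  "lin_span B = {lin_comb B c | c. True}"

definition lin_indep :: "(nat \<Rightarrow> 'a::field) set \<Rightarrow> bool" where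
  "lin_indep B \<longleftrightarrow> (\<forall>c. lin_comb B c = (\<lambda>_. 0) \<longrightarrow> (\<forall>b\<in>B. c b = 0))"

definition subspace_dim :: "nat \<Rightarrow> (nat \<Rightarrow> 'a::field) set \<Rightarrow> nat \<Rightarrow> bool" where
  "subspace_dim n V d \<longleftrightarrow>
     (\<exists>B. finite B \<and> B \<subseteq> vecs n \<and> card B = d \<and> lin_indep B \<and> V = lin_span B)"

definition dir_set :: "nat \<Rightarrow> (nat \<Rightarrow> 'a::field) set \<Rightarrow> (nat \<Rightarrow> 'a) set" where
  "dir_set n A = {d \<in> vecs n. \<exists>x\<in>vecs n. \<forall>c::'a. (\<lambda>i. x i + c * d i) \<in> A}"

definition omega_dir :: "nat \<Rightarrow> (nat \<Rightarrow> 'a::field) set \<Rightarrow> nat" where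
  "omega_dir n A = Max {d. \<exists>V. subspace_dim n V d \<and> V \<subseteq> dir_set n A \<union> {\<lambda>_. 0}}"

text \<open>m_q(t) and R_q(s,t) as minima, valued in enat (infinity if no such n exists).\<close>
definition m_q :: "'a::{finite,field} itself \<Rightarrow> nat \<Rightarrow> enat" where
  "m_q _ t = Inf {enat n | n. \<forall>A::(nat \<Rightarrow> 'a) set. A \<subseteq> vecs n \<longrightarrow>
       real (card A) \<ge> (real (card (UNIV :: 'a set))) powi (int n - int t + 1) \<longrightarrow> omega_dir n A \<ge> t}"

definition R_q :: "'a::{finite,field} itself \<Rightarrow> nat \<Rightarrow> nat \<Rightarrow> enat" where
  "R_q _ s t = Inf {enat n | n. \<forall>red :: (nat \<Rightarrow> 'a) set \<Rightarrow> bool.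
       (\<exists>V. subspace_dim n V s \<and> (\<forall>L. subspace_dim n L 1 \<and> L \<subseteq> V \<longrightarrow> red L))
     \<or> (\<exists>V. subspace_dim n V t \<and> (\<forall>L. subspace_dim n L 1 \<and> L \<subseteq> V \<longrightarrow> \<not> red L))}"

end

(*
  Let S be the set of nonzero vectors spanning red lines. It is closed under nonzero scaling,
  a red plane is a plane inside S \<union> {0}, and a blue t-space is a t-dimensional subspace
  disjoint from S. Assume there is no red plane.

  If |S| \<ge> q^(n-t+1), the defining property of m_q(t) gives a t-dimensional subspace of
  directions of S. It misses S: a direction y \<in> S of a line x + F y inside S would make
  span {x, y} a plane inside S \<union> {0}.

  If |S| < q^(n-t+1), a subspace W missing S is extended by a vector x whose coset x + W
  misses S; counting the differences s - w shows that such x exists while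
  |S| |W| < q^n - |W|. This holds in every step but the last, where the count is tight.
  There, one starts from a difference b = s - s' \<notin> S \<union> {0} of two elements of S, which
  makes the difference map on S \<times> W non-injective and saves the missing vector; if no such
  difference exists, S \<union> {0} is a subspace without planes, hence |S| < q.
*)

theory Submission
  imports Defs "HOL-Library.Function_Algebras" "HOL-Library.FuncSet"
begin

lemma card_field_ge_2: "2 \<le> card (UNIV :: 'a::{finite,field} set)"
  using card_mono[of UNIV "{0, 1 :: 'a}"] by simp

lemma exists_coset_avoiding:
  fixes S W U :: "'b::ab_group_add set"
  assumes "finite S" "finite W" "card ((\<lambda>(s, w). s - w) ` (S \<times> W)) < card U - card W"
  shows "\<exists>x\<in>U - W. \<forall>w\<in>W. x + w \<notin> S"
proof (rule ccontr)
  assume "\<not> ?thesis"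
  then have "U - W \<subseteq> (\<lambda>(s, w). s - w) ` (S \<times> W)"
    by (force simp: image_iff)
  then have "card (U - W) \<le> card ((\<lambda>(s, w). s - w) ` (S \<times> W))"
    using assms(1,2) by (intro card_mono) auto
  moreover have "card U - card W \<le> card (U - W)"
    using assms(2) by (rule diff_card_le_card_Diff)
  ultimately show False
    using assms(3) by linarith
qed

lemma card_differences_less:
  fixes S W :: "'b::ab_group_add set"
  assumes "finite S" "finite W" "s \<in> S" "s' \<in> S" "s \<noteq> s'" "s - s' \<in> W" "0 \<in> W"
  shows "card ((\<lambda>(s, w). s - w) ` (S \<times> W)) < card S * card W"
proof -
  have "\<not> inj_on (\<lambda>(s, w). s - w) (S \<times> W)"
  proof
    assume "inj_on (\<lambda>(s, w). s - w) (S \<times> W)"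
    then have "(s, s - s') = (s', 0)"
      by (rule inj_onD) (use assms(3-7) in auto)
    then show False
      using assms(5) by simp
  qed
  then have "card ((\<lambda>(s, w). s - w) ` (S \<times> W)) \<noteq> card (S \<times> W)"
    using assms(1,2) by (simp add: inj_on_iff_eq_card)
  moreover have "card ((\<lambda>(s, w). s - w) ` (S \<times> W)) \<le> card (S \<times> W)"
    using assms(1,2) by (intro card_image_le) auto
  ultimately show ?thesis
    by (simp add: card_cartesian_product)
qed

locale finite_vector_space = vector_space scale
  for scale :: "'a::{finite,field} \<Rightarrow> 'b::ab_group_add \<Rightarrow> 'b" (infixr \<open>*s\<close> 75)
begin

definition scale_closed :: "'b set \<Rightarrow> bool" where
  "scale_closed S \<longleftrightarrow> (\<forall>c x. c \<noteq> 0 \<longrightarrow> x \<in> S \<longrightarrow> c *s x \<in> S)"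

definition contains_plane :: "'b set \<Rightarrow> bool" where
  "contains_plane A \<longleftrightarrow> (\<exists>x y. x \<noteq> y \<and> independent {x, y} \<and> span {x, y} \<subseteq> A)"

lemma scale_closedD: "scale_closed S \<Longrightarrow> c \<noteq> 0 \<Longrightarrow> x \<in> S \<Longrightarrow> c *s x \<in> S"
  unfolding scale_closed_def by blast

lemma scale_closed_inverse: "scale_closed S \<Longrightarrow> c *s x \<in> S \<Longrightarrow> c \<noteq> 0 \<Longrightarrow> x \<in> S"
  using scale_closedD[of S "inverse c" "c *s x"] by simp

lemma card_span_independent:
  assumes "finite B" "independent B"
  shows "card (span B) = card (UNIV :: 'a set) ^ card B"
proof -
  let ?comb = "\<lambda>u. \<Sum>v\<in>B. u v *s v"
  have "?comb u \<in> ?comb ` (B \<rightarrow>\<^sub>E UNIV)" for u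
    by (rule image_eqI[of _ _ "restrict u B"]) (simp_all cong: sum.cong)
  then have span: "span B = ?comb ` (B \<rightarrow>\<^sub>E UNIV)"
    unfolding span_finite[OF assms(1)] by auto
  have "inj_on ?comb (B \<rightarrow>\<^sub>E UNIV)"
  proof (rule inj_onI)
    fix u u' assume u: "u \<in> B \<rightarrow>\<^sub>E UNIV" "u' \<in> B \<rightarrow>\<^sub>E UNIV" and eq: "?comb u = ?comb u'"
    have "(\<Sum>v\<in>B. (u v - u' v) *s v) = 0"
      using eq by (simp add: scale_left_diff_distrib sum_subtractf)
    then have "\<forall>v\<in>B. u v - u' v = 0"
      using assms(2) unfolding dependent_finite[OF assms(1)]
      by (auto dest: spec[of _ "\<lambda>v. u v - u' v"])
    then show "u = u'"
      using u by (auto simp: PiE_def extensional_def fun_eq_iff)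
  qed
  then show ?thesis
    using assms(1) by (simp add: span card_image card_PiE)
qed

lemma span_insert_disjoint:
  assumes S: "scale_closed S" and B: "span B \<inter> S = {}" and x: "\<forall>w\<in>span B. x + w \<notin> S"
  shows "span (insert x B) \<inter> S = {}"
proof -
  have "y \<notin> S" if "y - k *s x \<in> span B" for y k
  proof (cases "k = 0")
    case True
    then show ?thesis using that B by auto
  next
    case False
    have "inverse k *s y = x + inverse k *s (y - k *s x)"
      using False by (simp add: scale_right_diff_distrib)
    moreover have "inverse k *s (y - k *s x) \<in> span B"
      using that by (rule span_scale)
    ultimately have "inverse k *s y \<notin> S"
      using x by auto
    then show ?thesis
      using S False scale_closedD by auto
  qed
  then show ?thesis
    by (auto simp: span_insert)
qed

lemma extend_independent_avoiding:
  assumes U: "subspace U" "finite U" and S: "S \<subseteq> U" "scale_closed S"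
    and B: "B \<subseteq> U" "independent B" "span B \<inter> S = {}" "card B \<le> t"
    and room: "\<And>B'. B \<subseteq> B' \<Longrightarrow> B' \<subseteq> U \<Longrightarrow> independent B' \<Longrightarrow> card B' < t \<Longrightarrow>
      card ((\<lambda>(s, w). s - w) ` (S \<times> span B')) < card U - card (span B')"
  shows "\<exists>B'. B \<subseteq> B' \<and> B' \<subseteq> U \<and> independent B' \<and> card B' = t \<and> span B' \<inter> S = {}"
  using B room
proof (induction "t - card B" arbitrary: B)
  case 0
  then show ?case
    by (intro exI[of _ B]) simp
next
  case (Suc m)
  have fin: "finite B" "finite (span B)"
    using finite_subset[OF Suc.prems(1) U(2)]
      finite_subset[OF span_minimal[OF Suc.prems(1) U(1)] U(2)] by simp_all
  have "card ((\<lambda>(s, w). s - w) ` (S \<times> span B)) < card U - card (span B)"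
    using Suc.hyps(2) Suc.prems(1,2) by (intro Suc.prems(5)) auto
  then obtain x where x: "x \<in> U - span B" "\<forall>w\<in>span B. x + w \<notin> S"
    using exists_coset_avoiding finite_subset[OF S(1) U(2)] fin(2) by blast
  have "x \<notin> B"
    using x(1) span_superset by blast
  have "\<exists>B'. insert x B \<subseteq> B' \<and> B' \<subseteq> U \<and> independent B' \<and> card B' = t \<and> span B' \<inter> S = {}"
  proof (rule Suc.hyps(1))
    show "m = t - card (insert x B)" "card (insert x B) \<le> t"
      using Suc.hyps(2) fin(1) \<open>x \<notin> B\<close> by simp_all
    show "insert x B \<subseteq> U"
      using Suc.prems(1) x(1) by blast
    show "independent (insert x B)"
      using x(1) Suc.prems(2) by (intro independent_insertI) auto
    show "span (insert x B) \<inter> S = {}"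
      using S(2) Suc.prems(3) x(2) by (rule span_insert_disjoint)
    show "card ((\<lambda>(s, w). s - w) ` (S \<times> span B')) < card U - card (span B')"
      if "insert x B \<subseteq> B'" "B' \<subseteq> U" "independent B'" "card B' < t" for B'
      using that by (intro Suc.prems(5)) auto
  qed
  then obtain B' where "insert x B \<subseteq> B'" "B' \<subseteq> U" "independent B'" "card B' = t"
    "span B' \<inter> S = {}"
    by blast
  then show ?case
    by (intro exI[of _ B']) auto
qed

lemma contains_plane_if_line_inside:
  assumes S: "scale_closed S" "0 \<notin> S" and y: "y \<in> S" and line: "\<And>c. x + c *s y \<in> S"
  shows "contains_plane (insert 0 S)"
proof -
  have "y \<noteq> 0"
    using y S(2) by auto
  have x: "x \<notin> span {y}"
  proof
    assume "x \<in> span {y}"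
    then obtain k where "x = k *s y"
      by (auto simp: span_singleton)
    then have "x + (- k) *s y = 0"
      by simp
    then show False
      using line[of "- k"] S(2) by simp
  qed
  then have "x \<noteq> y"
    using span_base[of y "{y}"] by auto
  moreover have "independent {x, y}"
    using x \<open>y \<noteq> 0\<close> by (intro independent_insertI independent_empty) auto
  moreover have "span {x, y} \<subseteq> insert 0 S"
  proof
    fix z assume "z \<in> span {x, y}"
    then obtain a b where "z - a *s x = b *s y"
      by (auto simp: span_insert span_singleton)
    then have z: "z = a *s x + b *s y"
      by (simp add: diff_eq_eq add.commute)
    show "z \<in> insert 0 S"
    proof (cases "a = 0")
      case True
      then show ?thesis
        using z y S(1) scale_closedD[of S b y] by (cases "b = 0") auto
    next
      case False
      then have "z = a *s (x + (b / a) *s y)"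
        using z by (simp add: scale_right_distrib)
      then show ?thesis
        using S(1) line False scale_closedD by auto
    qed
  qed
  ultimately show ?thesis
    unfolding contains_plane_def by blast
qed

lemma subspace_insert_zero_if_differences_closed:
  assumes S: "scale_closed S" and diff: "\<And>s s'. s \<in> S \<Longrightarrow> s' \<in> S \<Longrightarrow> s - s' \<in> insert 0 S"
  shows "subspace (insert 0 S)"
  unfolding subspace_def
proof (intro conjI ballI allI)
  fix x y assume x: "x \<in> insert 0 S" and y: "y \<in> insert 0 S"
  show "x + y \<in> insert 0 S"
  proof (cases "x = 0 \<or> y = 0")
    case True
    then show ?thesis
      using x y by auto
  next
    case False
    then have "(- 1) *s y \<in> S"
      using y S scale_closedD[of S "- 1" y] by simp
    then have "x - (- 1) *s y \<in> insert 0 S"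
      using diff x False by blast
    then show ?thesis
      by simp
  qed
next
  fix c x assume "x \<in> insert 0 S"
  then show "c *s x \<in> insert 0 S"
    using S scale_closedD by (cases "c = 0") auto
qed simp

lemma card_less_if_differences_closed:
  assumes S: "scale_closed S" "0 \<notin> S" "\<not> contains_plane (insert 0 S)"
    and diff: "\<And>s s'. s \<in> S \<Longrightarrow> s' \<in> S \<Longrightarrow> s - s' \<in> insert 0 S"
  shows "card S < card (UNIV :: 'a set)"
proof (cases "S = {}")
  case True
  then show ?thesis
    by (simp add: finite_UNIV_card_ge_0)
next
  case False
  then obtain p where p: "p \<in> S"
    by blast
  have "subspace (insert 0 S)"
    using S(1) diff by (rule subspace_insert_zero_if_differences_closed)
  have "s \<in> span {p}" if s: "s \<in> S" for s
  proof (rule ccontr)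
    assume "s \<notin> span {p}"
    moreover have "p \<noteq> 0"
      using p S(2) by auto
    ultimately have "independent {s, p}"
      by (intro independent_insertI independent_empty) auto
    moreover have "s \<noteq> p"
      using \<open>s \<notin> span {p}\<close> span_base[of p "{p}"] by blast
    moreover have "span {s, p} \<subseteq> insert 0 S"
      using s p \<open>subspace (insert 0 S)\<close> by (intro span_minimal) auto
    ultimately show False
      using S(3) unfolding contains_plane_def by blast
  qed
  then have "S \<subseteq> (\<lambda>k. k *s p) ` (UNIV - {0})"
    using S(2) by (force simp: span_singleton)
  then have "card S \<le> card ((\<lambda>k. k *s p) ` (UNIV - {0}))"
    by (intro card_mono) auto
  also have "\<dots> \<le> card (UNIV - {0 :: 'a})"
    by (intro card_image_le) auto
  also have "\<dots> < card (UNIV :: 'a set)"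
    by (rule card_Diff1_less) simp_all
  finally show ?thesis .
qed

lemma exists_subspace_avoiding_small:
  assumes U: "subspace U" "finite U" "card U = card (UNIV :: 'a set) ^ n"
    and S: "S \<subseteq> U" "scale_closed S" "0 \<notin> S" "card S < card (UNIV :: 'a set)"
    and "t < n"
  shows "\<exists>B\<subseteq>U. independent B \<and> card B = t \<and> span B \<inter> S = {}"
proof -
  let ?q = "card (UNIV :: 'a set)"
  have "\<exists>B. {} \<subseteq> B \<and> B \<subseteq> U \<and> independent B \<and> card B = t \<and> span B \<inter> S = {}"
  proof (rule extend_independent_avoiding[OF U(1,2) S(1,2)])
    fix B assume B: "{} \<subseteq> B" "B \<subseteq> U" "independent B" "card B < t"
    have fin: "finite S" "finite B" "finite (span B)"
      using finite_subset[OF S(1) U(2)] finite_subset[OF B(2) U(2)]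
        finite_subset[OF span_minimal[OF B(2) U(1)] U(2)] by simp_all
    have "card ((\<lambda>(s, w). s - w) ` (S \<times> span B)) \<le> card S * card (span B)"
      using card_image_le[of "S \<times> span B"] fin by (simp add: card_cartesian_product)
    also have "\<dots> < card U - card (span B)"
    proof -
      have "(card S + 1) * ?q ^ card B \<le> ?q * ?q ^ card B"
        using S(4) by (intro mult_right_mono) auto
      also have "\<dots> < ?q ^ n"
        using card_field_ge_2[where 'a='a] \<open>t < n\<close> B(4)
          power_strict_increasing[of "Suc (card B)" n ?q] by simp
      finally show ?thesis
        using card_span_independent[OF fin(2) B(3)] U(3) by (simp add: algebra_simps)
    qed
    finally show "card ((\<lambda>(s, w). s - w) ` (S \<times> span B)) < card U - card (span B)" .
  qed (use S(3) independent_empty in auto)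
  then show ?thesis
    by blast
qed

lemma exists_subspace_avoiding_difference:
  assumes U: "subspace U" "finite U" "card U = card (UNIV :: 'a set) ^ n"
    and S: "S \<subseteq> U" "scale_closed S" "0 \<notin> S" "card S < card (UNIV :: 'a set) ^ (n + 1 - t)"
    and s: "s \<in> S" "s' \<in> S" "s - s' \<notin> insert 0 S"
    and t: "0 < t" "t < n"
  shows "\<exists>B\<subseteq>U. independent B \<and> card B = t \<and> span B \<inter> S = {}"
proof -
  let ?q = "card (UNIV :: 'a set)"
  have "{s - s'} \<subseteq> U"
    using s(1,2) S(1) subspace_diff[OF U(1)] by blast
  moreover have "independent {s - s'}"
    using s(3) by simp
  moreover have "k *s (s - s') \<notin> S" for k
    using s(3) S(3) scale_closed_inverse[OF S(2), of k "s - s'"] by (cases "k = 0") auto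
  then have "span {s - s'} \<inter> S = {}"
    by (auto simp: span_singleton)
  moreover have "card {s - s'} \<le> t"
    using t(1) by simp
  ultimately have "\<exists>B. {s - s'} \<subseteq> B \<and> B \<subseteq> U \<and> independent B \<and> card B = t \<and> span B \<inter> S = {}"
  proof (rule extend_independent_avoiding[OF U(1,2) S(1,2)])
    fix B assume B: "{s - s'} \<subseteq> B" "B \<subseteq> U" "independent B" "card B < t"
    have fin: "finite S" "finite B" "finite (span B)"
      using finite_subset[OF S(1) U(2)] finite_subset[OF B(2) U(2)]
        finite_subset[OF span_minimal[OF B(2) U(1)] U(2)] by simp_all
    \<comment> \<open>\<open>(s, s - s')\<close> and \<open>(s', 0)\<close> collide, which pays for the tight last step\<close>
    have "card ((\<lambda>(s, w). s - w) ` (S \<times> span B)) < card S * card (span B)"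
      using s(3) B(1)
      by (intro card_differences_less[OF fin(1,3) s(1,2)]) (auto intro: span_base span_zero)
    also have "\<dots> \<le> card U - card (span B)"
    proof -
      have "(card S + 1) * ?q ^ card B \<le> ?q ^ (n + 1 - t) * ?q ^ card B"
        using S(4) by (intro mult_right_mono) auto
      also have "\<dots> \<le> ?q ^ n"
        unfolding power_add[symmetric] using card_field_ge_2[where 'a='a] t(2) B(4)
        by (intro power_increasing) auto
      finally show ?thesis
        using card_span_independent[OF fin(2) B(3)] U(3) by (simp add: algebra_simps)
    qed
    finally show "card ((\<lambda>(s, w). s - w) ` (S \<times> span B)) < card U - card (span B)" .
  qed
  then show ?thesis
    by blast
qed

theorem exists_subspace_avoiding:
  assumes U: "subspace U" "finite U" "card U = card (UNIV :: 'a set) ^ n"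
    and S: "S \<subseteq> U" "scale_closed S" "0 \<notin> S" "\<not> contains_plane (insert 0 S)"
    and t: "0 < t" "t < n" "card S < card (UNIV :: 'a set) ^ (n + 1 - t)"
  shows "\<exists>B\<subseteq>U. independent B \<and> card B = t \<and> span B \<inter> S = {}"
proof (cases "\<exists>s\<in>S. \<exists>s'\<in>S. s - s' \<notin> insert 0 S")
  case True
  then show ?thesis
    using exists_subspace_avoiding_difference[OF U S(1-3) t(3) _ _ _ t(1,2)] by blast
next
  case False
  then have "card S < card (UNIV :: 'a set)"
    by (intro card_less_if_differences_closed[OF S(2-4)]) auto
  then show ?thesis
    using exists_subspace_avoiding_small[OF U S(1-3) _ t(2)] by blast
qed

end

interpretation fvec: finite_vector_space "\<lambda>(c::'a::{finite,field}) (v::nat \<Rightarrow> 'a) i. c * v i"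
  by unfold_locales (simp_all add: fun_eq_iff algebra_simps)

lemma sum_fun_apply: "(\<Sum>x\<in>A. f x) i = (\<Sum>x\<in>A. f x i)"
  by (induction A rule: infinite_finite_induct) auto

lemma lin_comb_eq_sum: "lin_comb B c = (\<Sum>b\<in>B. (\<lambda>i. c b * b i))"
  by (simp add: lin_comb_def fun_eq_iff sum_fun_apply)

lemma lin_span_eq_span: "finite B \<Longrightarrow> lin_span B = fvec.span B"
  by (auto simp: lin_span_def fvec.span_finite lin_comb_eq_sum)

lemma lin_indep_iff_independent: "finite B \<Longrightarrow> lin_indep B \<longleftrightarrow> fvec.independent B"
  by (auto simp: lin_indep_def fvec.dependent_finite lin_comb_eq_sum zero_fun_def)

lemma subspace_vecs: "fvec.subspace (vecs n)"
  by (auto simp: fvec.subspace_def vecs_def)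

lemma vecs_mono: "m \<le> n \<Longrightarrow> vecs m \<subseteq> vecs n"
  by (auto simp: vecs_def)

lemma bij_betw_restrict_vecs:
  "bij_betw (\<lambda>v. restrict v {..<n}) (vecs n) ({..<n} \<rightarrow>\<^sub>E (UNIV :: 'a::field set))"
  by (rule bij_betwI[where g = "\<lambda>f i. if i < n then f i else 0"])
    (auto simp: vecs_def fun_eq_iff PiE_def extensional_def)

lemma finite_vecs: "finite (vecs n :: (nat \<Rightarrow> 'a::{finite,field}) set)"
  using bij_betw_finite[OF bij_betw_restrict_vecs[where 'a='a]] by (simp add: finite_PiE)

lemma card_vecs: "card (vecs n :: (nat \<Rightarrow> 'a::{finite,field}) set) = card (UNIV :: 'a set) ^ n"
  using bij_betw_same_card[OF bij_betw_restrict_vecs[where 'a='a]] by (simp add: card_PiE)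

lemma subspace_dim_iff:
  fixes V :: "(nat \<Rightarrow> 'a::{finite,field}) set"
  shows "subspace_dim n V d \<longleftrightarrow>
    (\<exists>B\<subseteq>vecs n. fvec.independent B \<and> card B = d \<and> V = fvec.span B)"
  unfolding subspace_dim_def
  by (metis finite_subset finite_vecs lin_indep_iff_independent lin_span_eq_span)

lemma card_subspace_dim:
  fixes V :: "(nat \<Rightarrow> 'a::{finite,field}) set"
  shows "subspace_dim n V d \<Longrightarrow> card V = card (UNIV :: 'a set) ^ d"
  unfolding subspace_dim_iff
  using finite_subset[OF _ finite_vecs] fvec.card_span_independent by blast

lemma subspace_dim_le:
  assumes "subspace_dim n (V :: (nat \<Rightarrow> 'a::{finite,field}) set) d" "V \<subseteq> vecs m"
  shows "d \<le> m"
proof -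
  have "card (UNIV :: 'a set) ^ d \<le> card (UNIV :: 'a set) ^ m"
    using card_mono[OF finite_vecs assms(2)] by (simp add: card_subspace_dim[OF assms(1)] card_vecs)
  moreover have "1 < card (UNIV :: 'a set)"
    using card_field_ge_2[where 'a='a] by simp
  ultimately show ?thesis
    by (rule power_le_imp_le_exp[rotated])
qed

lemma subspace_dim_subset_vecs:
  assumes "subspace_dim n (V :: (nat \<Rightarrow> 'a::{finite,field}) set) d"
  shows "V \<subseteq> vecs n"
proof -
  obtain B where "B \<subseteq> vecs n" "V = fvec.span B"
    using assms unfolding subspace_dim_iff by blast
  then show ?thesis
    using fvec.span_minimal[OF _ subspace_vecs] by simp
qed

lemma subspace_dim_obtain_smaller:
  assumes "subspace_dim n (V :: (nat \<Rightarrow> 'a::{finite,field}) set) d" "t \<le> d"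
  obtains W where "W \<subseteq> V" "subspace_dim n W t"
proof -
  obtain B where B: "B \<subseteq> vecs n" "fvec.independent B" "card B = d" "V = fvec.span B"
    using assms(1) unfolding subspace_dim_iff by blast
  obtain B' where B': "B' \<subseteq> B" "card B' = t"
    using obtain_subset_with_card_n assms(2) B(3) by metis
  show ?thesis
  proof (rule that)
    show "fvec.span B' \<subseteq> V"
      using B(4) B'(1) by (simp add: fvec.span_mono)
    show "subspace_dim n (fvec.span B') t"
      unfolding subspace_dim_iff using B B' fvec.independent_mono by blast
  qed
qed

lemma subspace_dim_1E:
  assumes "subspace_dim n L 1"
  obtains y where "y \<in> vecs n" "y \<noteq> 0" "L = fvec.span {y :: nat \<Rightarrow> 'a::{finite,field}}"
  using assms unfolding subspace_dim_iff
  by (metis card_1_singletonE fvec.dependent_single insert_subset)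

lemma omega_dir_geD:
  assumes "t \<le> omega_dir n (A :: (nat \<Rightarrow> 'a::{finite,field}) set)"
  obtains V where "subspace_dim n V t" "V \<subseteq> dir_set n A \<union> {0}"
proof -
  let ?D = "{d. \<exists>V. subspace_dim n V d \<and> V \<subseteq> dir_set n A \<union> {\<lambda>_. 0}}"
  have "?D \<subseteq> {..n}"
    using subspace_dim_le[OF _ subspace_dim_subset_vecs] by blast
  then have "finite ?D"
    by (rule finite_subset) simp
  moreover have "subspace_dim n {0 :: nat \<Rightarrow> 'a} 0"
    unfolding subspace_dim_iff using fvec.independent_empty by (intro exI[of _ "{}"]) simp
  then have "0 \<in> ?D"
    by (force simp: zero_fun_def)
  ultimately have "omega_dir n A \<in> ?D"
    unfolding omega_dir_def by (intro Max_in) auto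
  then obtain V where V: "subspace_dim n V (omega_dir n A)" "V \<subseteq> dir_set n A \<union> {0}"
    by (auto simp: zero_fun_def)
  obtain W where "W \<subseteq> V" "subspace_dim n W t"
    using subspace_dim_obtain_smaller[OF V(1) assms] .
  then show ?thesis
    using V(2) that by blast
qed

lemma dir_set_subset_vecs: "A \<subseteq> vecs m \<Longrightarrow> dir_set n A \<subseteq> vecs m"
proof
  fix d assume "A \<subseteq> vecs m" "d \<in> dir_set n A"
  then obtain x where "\<And>c. (\<lambda>i. x i + c * d i) \<in> vecs m"
    unfolding dir_set_def by blast
  from this[of 0] this[of 1] show "d \<in> vecs m"
    by (auto simp: vecs_def)
qed

lemma subspace_dim_2_if_contains_plane:
  assumes "fvec.contains_plane A" "A \<subseteq> vecs n"
  obtains V where "V \<subseteq> A" "subspace_dim n V 2"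
proof -
  obtain x y where xy: "x \<noteq> y" "fvec.independent {x, y}" "fvec.span {x, y} \<subseteq> A"
    using assms(1) unfolding fvec.contains_plane_def by blast
  moreover have "{x, y} \<subseteq> vecs n"
    using xy(3) assms(2) fvec.span_superset by blast
  ultimately have "subspace_dim n (fvec.span {x, y}) 2"
    unfolding subspace_dim_iff by (intro exI[of _ "{x, y}"]) auto
  with xy(3) show ?thesis
    by (rule that)
qed

definition red_points :: "nat \<Rightarrow> ((nat \<Rightarrow> 'a::{finite,field}) set \<Rightarrow> bool) \<Rightarrow> (nat \<Rightarrow> 'a) set" where
  "red_points n red = {y \<in> vecs n. y \<noteq> 0 \<and> red (fvec.span {y})}"

lemma scale_closed_red_points: "fvec.scale_closed (red_points n red)"
  unfolding fvec.scale_closed_def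
proof (intro allI impI)
  fix c :: 'a and y assume "c \<noteq> 0" "y \<in> red_points n red"
  moreover have "fvec.span {\<lambda>i. c * y i} = fvec.span {y}"
    unfolding fvec.span_eq
    using fvec.span_scale[of y "{y}" c] \<open>c \<noteq> 0\<close>
      fvec.span_scale[of "\<lambda>i. c * y i" "{\<lambda>i. c * y i}" "inverse c"]
    by (auto intro: fvec.span_base)
  moreover have "(\<lambda>i. c * y i) \<in> vecs n"
    using subspace_vecs fvec.subspace_scale \<open>y \<in> red_points n red\<close> by (auto simp: red_points_def)
  ultimately show "(\<lambda>i. c * y i) \<in> red_points n red"
    by (auto simp: red_points_def fun_eq_iff)
qed

lemma red_if_subset_red_points:
  assumes "subspace_dim n L 1" "L \<subseteq> insert 0 (red_points n red)"
  shows "red L"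
proof -
  obtain y where "y \<noteq> 0" "L = fvec.span {y}"
    using assms(1) by (rule subspace_dim_1E)
  moreover have "y \<in> L"
    using calculation fvec.span_base by blast
  ultimately show ?thesis
    using assms(2) by (auto simp: red_points_def)
qed

lemma not_red_if_disjoint_red_points:
  assumes "subspace_dim n L 1" "L \<inter> red_points n red = {}"
  shows "\<not> red L"
proof -
  obtain y where "y \<in> vecs n" "y \<noteq> 0" "L = fvec.span {y}"
    using assms(1) by (rule subspace_dim_1E)
  moreover have "y \<in> L"
    using calculation fvec.span_base by blast
  ultimately show ?thesis
    using assms(2) by (auto simp: red_points_def)
qed

definition large_sets_have_directions :: "'a::{finite,field} itself \<Rightarrow> nat \<Rightarrow> nat \<Rightarrow> bool" where
  "large_sets_have_directions _ n t \<longleftrightarrow> (\<forall>A::(nat \<Rightarrow> 'a) set. A \<subseteq> vecs n \<longrightarrow>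
     real (card A) \<ge> (real (card (UNIV :: 'a set))) powi (int n - int t + 1) \<longrightarrow> omega_dir n A \<ge> t)"

definition ramsey_property :: "'a::{finite,field} itself \<Rightarrow> nat \<Rightarrow> nat \<Rightarrow> nat \<Rightarrow> bool" where
  "ramsey_property _ n s t \<longleftrightarrow> (\<forall>red :: (nat \<Rightarrow> 'a) set \<Rightarrow> bool.
       (\<exists>V. subspace_dim n V s \<and> (\<forall>L. subspace_dim n L 1 \<and> L \<subseteq> V \<longrightarrow> red L))
     \<or> (\<exists>V. subspace_dim n V t \<and> (\<forall>L. subspace_dim n L 1 \<and> L \<subseteq> V \<longrightarrow> \<not> red L)))"

lemma m_q_eq_Inf:
  "m_q TYPE('a::{finite,field}) t = Inf {enat n | n. large_sets_have_directions TYPE('a) n t}"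
  unfolding m_q_def large_sets_have_directions_def ..

lemma R_q_eq_Inf:
  "R_q TYPE('a::{finite,field}) s t = Inf {enat n | n. ramsey_property TYPE('a) n s t}"
  unfolding R_q_def ramsey_property_def ..

lemma large_sets_have_directions_imp_less:
  assumes "large_sets_have_directions TYPE('a::{finite,field}) n t" "2 \<le> t"
  shows "t < n"
proof (rule ccontr)
  assume "\<not> t < n"
  let ?q = "real (card (UNIV :: 'a set))"
  \<comment> \<open>a line is large enough once \<open>n \<le> t\<close>, but its directions span at most a line\<close>
  let ?A = "vecs (min 1 n) :: (nat \<Rightarrow> 'a) set"
  have "?q powi (int n - int t + 1) \<le> ?q powi int (min 1 n)"
    using \<open>\<not> t < n\<close> assms(2) finite_UNIV_card_ge_0[where 'a='a]
    by (intro power_int_increasing) (auto simp: min_def)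
  moreover have "real (card ?A) = ?q powi int (min 1 n)"
    by (simp add: card_vecs)
  ultimately have "t \<le> omega_dir n ?A"
    using assms(1) vecs_mono[of "min 1 n" n] unfolding large_sets_have_directions_def by auto
  then obtain V where "subspace_dim n V t" "V \<subseteq> dir_set n ?A \<union> {0}"
    by (rule omega_dir_geD)
  moreover have "dir_set n ?A \<union> {0} \<subseteq> ?A"
    using dir_set_subset_vecs[of ?A] by (auto simp: vecs_def)
  ultimately have "t \<le> min 1 n"
    by (meson order_trans subspace_dim_le)
  then show False
    using assms(2) by simp
qed

lemma subspace_disjoint_if_large:
  fixes S :: "(nat \<Rightarrow> 'a::{finite,field}) set"
  assumes large: "large_sets_have_directions TYPE('a) n t" and "t < n"
    and S: "S \<subseteq> vecs n" "fvec.scale_closed S" "0 \<notin> S" "\<not> fvec.contains_plane (insert 0 S)"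
    and card: "card (UNIV :: 'a set) ^ (n + 1 - t) \<le> card S"
  obtains V where "subspace_dim n V t" "V \<inter> S = {}"
proof -
  have "int n - int t + 1 = int (n + 1 - t)"
    using \<open>t < n\<close> by simp
  then have "t \<le> omega_dir n S"
    using large S(1) card unfolding large_sets_have_directions_def
    by (metis of_nat_le_iff of_nat_power power_int_of_nat)
  then obtain V where V: "subspace_dim n V t" "V \<subseteq> dir_set n S \<union> {0}"
    by (rule omega_dir_geD)
  have "y \<notin> S" if "y \<in> V" for y
  proof
    assume "y \<in> S"
    then have "y \<in> dir_set n S"
      using V(2) that S(3) by auto
    then obtain x where "\<And>c. (\<lambda>i. x i + c * y i) \<in> S"
      unfolding dir_set_def by blast
    then have "fvec.contains_plane (insert 0 S)"
      using fvec.contains_plane_if_line_inside[OF S(2,3) \<open>y \<in> S\<close>, of x]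
      by (simp add: plus_fun_def)
    then show False
      using S(4) by blast
  qed
  then show ?thesis
    using V(1) that by blast
qed

lemma subspace_disjoint_if_no_plane:
  fixes S :: "(nat \<Rightarrow> 'a::{finite,field}) set"
  assumes large: "large_sets_have_directions TYPE('a) n t" and "2 \<le> t"
    and S: "S \<subseteq> vecs n" "fvec.scale_closed S" "0 \<notin> S" "\<not> fvec.contains_plane (insert 0 S)"
  obtains V where "subspace_dim n V t" "V \<inter> S = {}"
proof -
  have "t < n"
    using large \<open>2 \<le> t\<close> by (rule large_sets_have_directions_imp_less)
  show ?thesis
  proof (cases "card (UNIV :: 'a set) ^ (n + 1 - t) \<le> card S")
    case True
    with large \<open>t < n\<close> S show ?thesis
      by (rule subspace_disjoint_if_large[OF _ _ _ _ _ _ _ that])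
  next
    case False
    then obtain B where "B \<subseteq> vecs n" "fvec.independent B" "card B = t" "fvec.span B \<inter> S = {}"
      using fvec.exists_subspace_avoiding[OF subspace_vecs finite_vecs card_vecs S _ \<open>t < n\<close>]
        \<open>2 \<le> t\<close> by auto
    then show ?thesis
      using that[of "fvec.span B"] unfolding subspace_dim_iff by blast
  qed
qed

lemma large_sets_have_directions_imp_ramsey:
  assumes "large_sets_have_directions TYPE('a::{finite,field}) n t" "2 \<le> t"
  shows "ramsey_property TYPE('a) n 2 t"
  unfolding ramsey_property_def
proof (intro allI)
  fix red :: "(nat \<Rightarrow> 'a) set \<Rightarrow> bool"
  let ?S = "red_points n red"
  show "(\<exists>V. subspace_dim n V 2 \<and> (\<forall>L. subspace_dim n L 1 \<and> L \<subseteq> V \<longrightarrow> red L)) \<or>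
    (\<exists>V. subspace_dim n V t \<and> (\<forall>L. subspace_dim n L 1 \<and> L \<subseteq> V \<longrightarrow> \<not> red L))"
  proof (cases "fvec.contains_plane (insert 0 ?S)")
    case True
    moreover have "insert 0 ?S \<subseteq> vecs n"
      by (auto simp: red_points_def vecs_def)
    ultimately obtain V where V: "V \<subseteq> insert 0 ?S" "subspace_dim n V 2"
      by (rule subspace_dim_2_if_contains_plane)
    have "red L" if "subspace_dim n L 1" "L \<subseteq> V" for L
      using that(1) by (rule red_if_subset_red_points) (use that(2) V(1) in blast)
    then show ?thesis
      using V(2) by blast
  next
    case False
    have S: "?S \<subseteq> vecs n" "0 \<notin> ?S"
      by (auto simp: red_points_def)
    obtain V where V: "subspace_dim n V t" "V \<inter> ?S = {}"
      by (rule subspace_disjoint_if_no_plane[OF assms S(1) scale_closed_red_points S(2) False])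
    have "\<not> red L" if "subspace_dim n L 1" "L \<subseteq> V" for L
      using that(1) by (rule not_red_if_disjoint_red_points) (use that(2) V(2) in blast)
    then show ?thesis
      using V(1) by blast
  qed
qed

theorem lemma6p2:
  fixes t :: nat
  assumes "t \<ge> 2"
  shows "R_q TYPE('a::{finite,field}) 2 t \<le> m_q TYPE('a) t"
  unfolding R_q_eq_Inf m_q_eq_Inf
  using large_sets_have_directions_imp_ramsey[OF _ assms] by (intro Inf_superset_mono) blast

end
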